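(* Let $\rho_1\in(0,1)$, $\rho_2\in(0,1-\rho_1)$ and let $\eta$ be a sample of $\mu^{\rho_1,\rho_2}$. There are constants $C,c>0$ such that for each interval $I\subseteq\mathbb{Z}$ of length $|I|=\ell$, \[ \mathbb{P}(\exists i\in I:\ \eta(i)=2)\ge1-Ce^{-c\ell}. \]
   Context: $\mu^{\rho_1,\rho_2}$ (queueing construction): let $(a(i))_{i\in\mathbb{Z}}$, $(s(i))_{i\in\mathbb{Z}}$ be independent families of i.i.d. Bernoulli variables with parameters $\rho_1$ and $\rho_1+\rho_2$; $\mathcal{A}_{[i,j]}=\sum_{k=i}^ja(k)$, $\mathcal{S}_{[i,j]}=\sum_{k=i}^js(k)$ (empty sums $0$); $Q_i=\sup_{j\ge i-1}(\mathcal{A}_{[i,j]}-\mathcal{S}_{[i,j]})$; $d(i)=1$ iff $s(i)=1$ and ($a(i)=1$ or $Q_{i+1}\ge1$) (equivalently, each $i$ with $a(i)=1$ is matched to the largest $j\le i$ with $s(j)=1$ not yet matched, and $d=1$ at matched sites). Set $\eta(i)=1$ if $d(i)=1$, $\eta(i)=2$ if $s(i)=1,d(i)=0$, $\eta(i)=+\infty$ if $s(i)=0$; $\mu^{\rho_1,\rho_2}$ is the law of $\eta$ (the translation-invariant stationary measure of the two-species TASEP; value $2$ = second class particle). An interval of length $\ell$ means $I=[u,v]\cap\mathbb{Z}$ with $v-u=\ell$. *)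

theory Defs
  imports "HOL-Probability.Probability"
begin

text \<open>Queueing construction of the stationary measure of the two-species TASEP.\<close>

definition bern_fam :: "real \<Rightarrow> (int \<Rightarrow> bool) measure" where
  "bern_fam p = (\<Pi>\<^sub>M i\<in>(UNIV::int set). measure_pmf (bernoulli_pmf p))"

definition queue_space :: "real \<Rightarrow> real \<Rightarrow> ((int \<Rightarrow> bool) \<times> (int \<Rightarrow> bool)) measure" where
  "queue_space \<rho>1 \<rho>2 = bern_fam \<rho>1 \<Otimes>\<^sub>M bern_fam (\<rho>1 + \<rho>2)"

text \<open>Counting sums over [i,j] (empty, hence 0, when j < i).\<close>
definition cnt :: "(int \<Rightarrow> bool) \<Rightarrow> int \<Rightarrow> int \<Rightarrow> int" where
  "cnt x i j = (\<Sum>k\<in>{i..j}. if x k then 1 else 0)"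

definition queueQ :: "(int \<Rightarrow> bool) \<Rightarrow> (int \<Rightarrow> bool) \<Rightarrow> int \<Rightarrow> ereal" where
  "queueQ a s i = (SUP j\<in>{i - 1..}. ereal (real_of_int (cnt a i j - cnt s i j)))"

definition departure :: "(int \<Rightarrow> bool) \<Rightarrow> (int \<Rightarrow> bool) \<Rightarrow> int \<Rightarrow> bool" where
  "departure a s i \<longleftrightarrow> s i \<and> (a i \<or> queueQ a s (i + 1) \<ge> 1)"

definition eta :: "(int \<Rightarrow> bool) \<Rightarrow> (int \<Rightarrow> bool) \<Rightarrow> int \<Rightarrow> enat" where
  "eta a s i = (if departure a s i then 1 else if s i then 2 else \<infinity>)"

end

theory Submission
  imports Defs
begin

text \<open>Let D(j) = S[u,j] - A[u,j], so D(u-1) = 0. If D(j) > 0 for every j \<ge> u + l, then the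
  last minimum k of D on [u-1, u+l] lies before u + l and D stays strictly above D(k) after k.
  Hence i = k + 1 is a service without arrival, and on every window (i, j] arrivals never
  outnumber services: no arrival can be matched to i, so \<eta>(i) = 2.
  Otherwise S[u,j] \<le> A[u,j] for some j \<ge> u + l. Services exceed arrivals by \<rho>2 per site in
  mean, so by Hoeffding's inequality this has probability at most 2 exp(-\<rho>2^2 (j - u + 1) / 2),
  and summing the geometric series over j gives the bound.\<close>

lemma cnt_extend_right: "u \<le> k + 1 \<Longrightarrow> cnt x u (k + 1) = cnt x u k + (if x (k + 1) then 1 else 0)"
proof -
  assume "u \<le> k + 1"
  then have "{u..k + 1} = insert (k + 1) {u..k}" by auto
  then show ?thesis unfolding cnt_def by simp
qed

lemma cnt_concat: "u \<le> i + 1 \<Longrightarrow> i \<le> j \<Longrightarrow> cnt x u j = cnt x u i + cnt x (i + 1) j"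
proof -
  assume "u \<le> i + 1" "i \<le> j"
  then have "{u..j} = {u..i} \<union> {i + 1..j}" by auto
  then show ?thesis unfolding cnt_def by (simp add: sum.union_disjoint)
qed

lemma of_int_cnt: "real_of_int (cnt x i j) = (\<Sum>k\<in>{i..j}. of_bool (x k))"
  unfolding cnt_def of_int_sum by (intro sum.cong) auto

lemma queueQ_ge_1_iff: "queueQ a s i \<ge> 1 \<longleftrightarrow> (\<exists>j\<ge>i - 1. cnt s i j < cnt a i j)"
proof
  assume "queueQ a s i \<ge> 1"
  then have "\<not> queueQ a s i \<le> 0" using order_trans[of 1 "queueQ a s i" 0] by auto
  then show "\<exists>j\<ge>i - 1. cnt s i j < cnt a i j"
    unfolding queueQ_def by (force intro: SUP_least)
next
  assume "\<exists>j\<ge>i - 1. cnt s i j < cnt a i j"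
  then obtain j where j: "j \<ge> i - 1" "1 \<le> cnt a i j - cnt s i j" by auto
  then have "ereal 1 \<le> ereal (real_of_int (cnt a i j - cnt s i j))" by simp
  also have "\<dots> \<le> queueQ a s i" unfolding queueQ_def using j by (intro SUP_upper) auto
  finally show "queueQ a s i \<ge> 1" by (simp add: one_ereal_def)
qed

lemma eta_eq_2_iff:
  "eta a s i = 2 \<longleftrightarrow> s i \<and> \<not> a i \<and> (\<forall>j\<ge>i. cnt a (i + 1) j \<le> cnt s (i + 1) j)"
  unfolding eta_def departure_def queueQ_ge_1_iff
  by (auto simp: numeral_eq_enat one_enat_def not_less)

lemma ex_ladder_point:
  fixes D :: "int \<Rightarrow> 'a::linorder"
  assumes "a < b" and above: "\<forall>j\<ge>b. D a < D j"
  shows "\<exists>k\<in>{a..<b}. \<forall>j>k. D k < D j"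
proof -
  define m where "m = Min (D ` {a..b})"
  define k where "k = Max {k\<in>{a..b}. D k = m}"
  have fin: "finite {k\<in>{a..b}. D k = m}" by (rule finite_subset[of _ "{a..b}"]) auto
  have "m \<in> D ` {a..b}" unfolding m_def using \<open>a < b\<close> by simp
  then have "k \<in> {k\<in>{a..b}. D k = m}" unfolding k_def using fin by (intro Max_in) auto
  then have k: "k \<in> {a..b}" "D k = m" by auto
  have k_last: "j \<in> {a..b} \<Longrightarrow> D j = m \<Longrightarrow> j \<le> k" for j
    unfolding k_def using fin by (intro Max_ge) simp_all
  have m_min: "j \<in> {a..b} \<Longrightarrow> m \<le> D j" for j unfolding m_def by simp
  have "k \<noteq> b" using above k m_min[of a] \<open>a < b\<close> by auto
  moreover have "D k < D j" if "j > k" for j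
  proof (cases "j \<le> b")
    case True
    then show ?thesis using that k k_last[of j] m_min[of j] by fastforce
  next
    case False
    then have "D a < D j" using above by simp
    moreover have "D k \<le> D a" using k m_min[of a] \<open>a < b\<close> by simp
    ultimately show ?thesis by simp
  qed
  ultimately show ?thesis using k by (intro bexI[of _ k]) auto
qed

lemma ex_eta_eq_2_if_services_exceed_arrivals:
  assumes lead: "\<forall>j\<ge>u + int l. cnt a u j < cnt s u j"
  shows "\<exists>i\<in>{u..u + int l}. eta a s i = 2"
proof -
  define D where "D j = cnt s u j - cnt a u j" for j
  have "D (u - 1) = 0" unfolding D_def cnt_def by simp
  then obtain k where k: "k \<in> {u - 1..<u + int l}" and ladder: "\<And>j. j > k \<Longrightarrow> D k < D j"
    using ex_ladder_point[of "u - 1" "u + int l" D] lead unfolding D_def by fastforce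
  define i where "i = k + 1"
  have "D i = D k + (if s i then 1 else 0) - (if a i then 1 else 0)"
    unfolding D_def i_def using k by (simp add: cnt_extend_right)
  then have i: "s i" "\<not> a i" "D i = D k + 1" using ladder[of i] unfolding i_def by (auto split: if_splits)
  have "cnt a (i + 1) j \<le> cnt s (i + 1) j" if "j \<ge> i" for j
    using cnt_concat[of u i j a] cnt_concat[of u i j s] ladder[of j] i that k
    unfolding D_def i_def by auto
  then show ?thesis using i k unfolding i_def eta_eq_2_iff by auto
qed

lemma (in product_prob_space) indep_vars_components:
  assumes "finite J" "J \<subseteq> I"
  shows "P.indep_vars M (\<lambda>i \<omega>. \<omega> i) J"
proof (cases "J = {}")
  case True
  then show ?thesis by (simp add: P.indep_vars_def indep_sets_def)
next
  case False
  have "(\<Pi>\<^sub>M i\<in>J. distr (PiM I M) (M i) (\<lambda>\<omega>. \<omega> i)) = PiM J M"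
    using assms by (intro PiM_cong refl PiM_component) auto
  then show ?thesis
    using assms False distr_PiM_restrict_finite[OF assms]
    by (subst P.indep_vars_iff_distr_eq_PiM') (auto intro: measurable_component_singleton)
qed

lemma (in pair_prob_space) measure_fst_event:
  assumes "{x\<in>space M1. P x} \<in> sets M1"
  shows "measure (M1 \<Otimes>\<^sub>M M2) {\<omega>\<in>space (M1 \<Otimes>\<^sub>M M2). P (fst \<omega>)} = measure M1 {x\<in>space M1. P x}"
proof -
  have "{\<omega>\<in>space (M1 \<Otimes>\<^sub>M M2). P (fst \<omega>)} = {x\<in>space M1. P x} \<times> space M2"
    by (auto simp: space_pair_measure)
  then show ?thesis
    using M2.emeasure_pair_measure_Times[OF assms sets.top] by (simp add: measure_def M2.emeasure_space_1)
qed

lemma (in pair_prob_space) measure_snd_event: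
  assumes "{y\<in>space M2. P y} \<in> sets M2"
  shows "measure (M1 \<Otimes>\<^sub>M M2) {\<omega>\<in>space (M1 \<Otimes>\<^sub>M M2). P (snd \<omega>)} = measure M2 {y\<in>space M2. P y}"
proof -
  have "{\<omega>\<in>space (M1 \<Otimes>\<^sub>M M2). P (snd \<omega>)} = space M1 \<times> {y\<in>space M2. P y}"
    by (auto simp: space_pair_measure)
  then show ?thesis
    using M2.emeasure_pair_measure_Times[OF sets.top[of M1] assms] by (simp add: measure_def M1.emeasure_space_1)
qed

lemma (in prob_space) measure_UN_le_geometric:
  assumes "\<And>m. E m \<in> events" "\<And>m. prob (E m) \<le> K * r ^ m" "0 \<le> r" "r < 1"
  shows "prob (\<Union>m. E m) \<le> K / (1 - r)"
proof -
  have geom: "summable (\<lambda>m. K * r ^ m)" using assms by (intro summable_mult summable_geometric) simp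
  then have "summable (\<lambda>m. prob (E m))"
    by (rule summable_comparison_test[rotated]) (use assms in auto)
  then have "prob (\<Union>m. E m) \<le> (\<Sum>m. prob (E m))"
    using assms by (intro finite_measure_subadditive_countably) auto
  also have "\<dots> \<le> (\<Sum>m. K * r ^ m)"
    by (rule suminf_le) (use assms geom \<open>summable (\<lambda>m. prob (E m))\<close> in auto)
  also have "\<dots> = K / (1 - r)" using assms by (simp add: suminf_mult suminf_geometric)
  finally show ?thesis .
qed

lemma prob_space_bern_fam: "prob_space (bern_fam p)"
  unfolding bern_fam_def by (intro prob_space_PiM measure_pmf.prob_space_axioms)

lemma prob_space_queue_space: "prob_space (queue_space r1 r2)"
  unfolding queue_space_def by (intro prob_space_pair prob_space_bern_fam)

text \<open>Deliberately not a measurable rule: the measurability prover would then try to read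
  events quantified over the sites as preimages of maps into bern_fam.\<close>

lemma measurable_bern_fam_coordinate:
  "(\<lambda>\<omega>. \<omega> k) \<in> bern_fam p \<rightarrow>\<^sub>M count_space UNIV"
proof -
  have "(\<lambda>\<omega>. \<omega> k) \<in> bern_fam p \<rightarrow>\<^sub>M measure_pmf (bernoulli_pmf p)"
    unfolding bern_fam_def by (rule measurable_component_singleton) simp
  then show ?thesis by (simp cong: measurable_cong_sets)
qed

lemma measurable_queue_space_coordinates[measurable]:
  "(\<lambda>\<omega>. fst \<omega> k) \<in> queue_space r1 r2 \<rightarrow>\<^sub>M count_space UNIV"
  "(\<lambda>\<omega>. snd \<omega> k) \<in> queue_space r1 r2 \<rightarrow>\<^sub>M count_space UNIV"
  unfolding queue_space_def
  by (intro measurable_compose[OF measurable_fst] measurable_compose[OF measurable_snd]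
      measurable_bern_fam_coordinate)+

lemma measurable_cnt[measurable]:
  assumes [measurable]: "\<And>k. (\<lambda>\<omega>. f \<omega> k) \<in> M \<rightarrow>\<^sub>M count_space UNIV"
  shows "(\<lambda>\<omega>. cnt (f \<omega>) i j) \<in> M \<rightarrow>\<^sub>M count_space UNIV"
proof -
  have "(\<lambda>\<omega>. cnt (f \<omega>) i j) = (\<lambda>\<omega>. \<lfloor>\<Sum>k\<in>{i..j}. of_bool (f \<omega> k) :: real\<rfloor>)"
    by (simp flip: of_int_cnt)
  then show ?thesis by (simp only:) measurable
qed

lemma measurable_eta[measurable]:
  "(\<lambda>\<omega>. eta (fst \<omega>) (snd \<omega>) i) \<in> queue_space r1 r2 \<rightarrow>\<^sub>M count_space UNIV"
  unfolding eta_def departure_def queueQ_def by measurable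

lemma bern_fam_sum_tails:
  fixes p \<epsilon> :: real
  assumes "finite J" "J \<noteq> {}" "0 \<le> p" "p \<le> 1" "0 \<le> \<epsilon>"
  shows "measure (bern_fam p) {\<omega>\<in>space (bern_fam p). (\<Sum>k\<in>J. of_bool (\<omega> k)) \<le> card J * p - \<epsilon>}
           \<le> exp (-2 * \<epsilon>\<^sup>2 / card J)"
    and "measure (bern_fam p) {\<omega>\<in>space (bern_fam p). (\<Sum>k\<in>J. of_bool (\<omega> k)) \<ge> card J * p + \<epsilon>}
           \<le> exp (-2 * \<epsilon>\<^sup>2 / card J)"
proof -
  interpret product_prob_space "\<lambda>_::int. measure_pmf (bernoulli_pmf p)" UNIV
    by (intro product_prob_spaceI measure_pmf.prob_space_axioms)
  have indep: "P.indep_vars (\<lambda>_. borel) (\<lambda>k \<omega>. of_bool (\<omega> k) :: real) J"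
    using indep_vars_components[OF assms(1)] by (rule P.indep_vars_compose2) auto
  have mean: "P.expectation (\<lambda>\<omega>. of_bool (\<omega> k) :: real) = p" for k
  proof -
    have "(\<lambda>\<omega>. \<omega> k) \<in> PiM UNIV (\<lambda>_. measure_pmf (bernoulli_pmf p)) \<rightarrow>\<^sub>M bernoulli_pmf p"
      by (rule measurable_component_singleton) simp
    then have "P.expectation (\<lambda>\<omega>. of_bool (\<omega> k) :: real)
        = integral\<^sup>L (distr (PiM UNIV (\<lambda>_. measure_pmf (bernoulli_pmf p))) (bernoulli_pmf p) (\<lambda>\<omega>. \<omega> k)) of_bool"
      by (subst integral_distr) auto
    also have "\<dots> = p" using assms by (subst PiM_component) auto
    finally show ?thesis .
  qed
  interpret Hoeffding_ineq "PiM UNIV (\<lambda>_. measure_pmf (bernoulli_pmf p))" J "\<lambda>k \<omega>. of_bool (\<omega> k)"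
      "\<lambda>_. 0" "\<lambda>_. 1" "real (card J) * p"
    by unfold_locales (simp_all add: assms indep mean)
  have "(\<Sum>k\<in>J. (1 - 0)\<^sup>2) = real (card J)" "(\<Sum>k\<in>J. (1 - 0)\<^sup>2) > (0::real)"
    using assms by (simp_all add: card_gt_0_iff)
  then show "measure (bern_fam p) {\<omega>\<in>space (bern_fam p). (\<Sum>k\<in>J. of_bool (\<omega> k)) \<le> card J * p - \<epsilon>}
           \<le> exp (-2 * \<epsilon>\<^sup>2 / card J)"
    and "measure (bern_fam p) {\<omega>\<in>space (bern_fam p). (\<Sum>k\<in>J. of_bool (\<omega> k)) \<ge> card J * p + \<epsilon>}
           \<le> exp (-2 * \<epsilon>\<^sup>2 / card J)"
    using Hoeffding_ineq_le[OF assms(5)] Hoeffding_ineq_ge[OF assms(5)] unfolding bern_fam_def by simp_all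
qed

lemma prob_services_le_arrivals:
  fixes \<rho>1 \<rho>2 :: real
  assumes "0 \<le> \<rho>1" "0 \<le> \<rho>2" "\<rho>1 + \<rho>2 \<le> 1" "finite J" "J \<noteq> {}"
  shows "measure (queue_space \<rho>1 \<rho>2) {\<omega>\<in>space (queue_space \<rho>1 \<rho>2).
           (\<Sum>k\<in>J. of_bool (snd \<omega> k)) \<le> (\<Sum>k\<in>J. of_bool (fst \<omega> k) :: real)}
         \<le> 2 * exp (- \<rho>2\<^sup>2 / 2 * card J)"
proof -
  interpret pair_prob_space "bern_fam \<rho>1" "bern_fam (\<rho>1 + \<rho>2)"
    by (intro pair_prob_space.intro pair_sigma_finite.intro prob_space_bern_fam prob_space_imp_sigma_finite)
  interpret Q: prob_space "queue_space \<rho>1 \<rho>2" by (rule prob_space_queue_space)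
  note measurable_bern_fam_coordinate[measurable]
  let ?Q = "queue_space \<rho>1 \<rho>2" and ?n = "real (card J)" and ?\<epsilon> = "real (card J) * \<rho>2 / 2"
  define few_services where "few_services =
    {\<omega>\<in>space ?Q. (\<Sum>k\<in>J. of_bool (snd \<omega> k)) \<le> ?n * (\<rho>1 + \<rho>2) - ?\<epsilon>}"
  define many_arrivals where "many_arrivals =
    {\<omega>\<in>space ?Q. (\<Sum>k\<in>J. of_bool (fst \<omega> k)) \<ge> ?n * \<rho>1 + ?\<epsilon>}"
  have "?n > 0" using assms by (simp add: card_gt_0_iff)
  then have tail: "exp (-2 * ?\<epsilon>\<^sup>2 / ?n) = exp (- \<rho>2\<^sup>2 / 2 * ?n)"
    by (simp add: power2_eq_square field_simps)
  have "measure ?Q few_services = measure (bern_fam (\<rho>1 + \<rho>2))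
      {y\<in>space (bern_fam (\<rho>1 + \<rho>2)). (\<Sum>k\<in>J. of_bool (y k)) \<le> ?n * (\<rho>1 + \<rho>2) - ?\<epsilon>}"
    unfolding few_services_def queue_space_def by (rule measure_snd_event) measurable
  also have "\<dots> \<le> exp (- \<rho>2\<^sup>2 / 2 * ?n)"
    unfolding tail[symmetric] by (rule bern_fam_sum_tails(1)) (use assms in auto)
  finally have "measure ?Q few_services \<le> exp (- \<rho>2\<^sup>2 / 2 * ?n)" .
  moreover have "measure ?Q many_arrivals = measure (bern_fam \<rho>1)
      {x\<in>space (bern_fam \<rho>1). (\<Sum>k\<in>J. of_bool (x k)) \<ge> ?n * \<rho>1 + ?\<epsilon>}"
    unfolding many_arrivals_def queue_space_def by (rule measure_fst_event) measurable
  moreover have "\<dots> \<le> exp (- \<rho>2\<^sup>2 / 2 * ?n)"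
    unfolding tail[symmetric] by (rule bern_fam_sum_tails(2)) (use assms in auto)
  moreover have "{\<omega>\<in>space ?Q. (\<Sum>k\<in>J. of_bool (snd \<omega> k)) \<le> (\<Sum>k\<in>J. of_bool (fst \<omega> k) :: real)}
      \<subseteq> few_services \<union> many_arrivals"
    unfolding few_services_def many_arrivals_def by (auto simp: algebra_simps)
  then have "measure ?Q {\<omega>\<in>space ?Q. (\<Sum>k\<in>J. of_bool (snd \<omega> k)) \<le> (\<Sum>k\<in>J. of_bool (fst \<omega> k) :: real)}
      \<le> measure ?Q few_services + measure ?Q many_arrivals"
    unfolding few_services_def many_arrivals_def
    by (intro measure_Un_le[THEN order_trans[rotated]] Q.finite_measure_mono)
      measurable
  ultimately show ?thesis by simp
qed

lemma prob_ex_services_le_arrivals: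
  fixes \<rho>1 \<rho>2 :: real
  assumes "0 \<le> \<rho>1" "0 < \<rho>2" "\<rho>1 + \<rho>2 \<le> 1"
  shows "measure (queue_space \<rho>1 \<rho>2)
           {\<omega>\<in>space (queue_space \<rho>1 \<rho>2). \<exists>j\<ge>u + int l. cnt (snd \<omega>) u j \<le> cnt (fst \<omega>) u j}
         \<le> 2 * exp (- \<rho>2\<^sup>2 / 2 * (l + 1)) / (1 - exp (- \<rho>2\<^sup>2 / 2))"
proof -
  interpret prob_space "queue_space \<rho>1 \<rho>2" by (rule prob_space_queue_space)
  define r where "r = exp (- \<rho>2\<^sup>2 / 2)"
  define E where "E m = {\<omega>\<in>space (queue_space \<rho>1 \<rho>2).
    cnt (snd \<omega>) u (u + int (l + m)) \<le> cnt (fst \<omega>) u (u + int (l + m))}" for m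
  have E_real: "E m = {\<omega>\<in>space (queue_space \<rho>1 \<rho>2).
    (\<Sum>k\<in>{u..u + int (l + m)}. of_bool (snd \<omega> k)) \<le> (\<Sum>k\<in>{u..u + int (l + m)}. of_bool (fst \<omega> k) :: real)}" for m
    unfolding E_def of_int_cnt[symmetric] by simp
  have "{\<omega>\<in>space (queue_space \<rho>1 \<rho>2). \<exists>j\<ge>u + int l. cnt (snd \<omega>) u j \<le> cnt (fst \<omega>) u j} = (\<Union>m. E m)"
    (is "?B = _")
  proof (intro equalityI subsetI)
    fix \<omega> assume "\<omega> \<in> ?B"
    then obtain j where "j \<ge> u + int l" "\<omega> \<in> space (queue_space \<rho>1 \<rho>2)" "cnt (snd \<omega>) u j \<le> cnt (fst \<omega>) u j"
      by auto
    then have "\<omega> \<in> E (nat (j - u - int l))" unfolding E_def by simp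
    then show "\<omega> \<in> (\<Union>m. E m)" by blast
  next
    fix \<omega> assume "\<omega> \<in> (\<Union>m. E m)"
    then obtain m where "\<omega> \<in> E m" by blast
    then show "\<omega> \<in> ?B" unfolding E_def by (auto intro!: exI[of _ "u + int (l + m)"])
  qed
  moreover have "prob (E m) \<le> 2 * exp (- \<rho>2\<^sup>2 / 2 * (l + 1)) * r ^ m" for m
  proof -
    have "prob (E m) \<le> 2 * exp (- \<rho>2\<^sup>2 / 2 * card {u..u + int (l + m)})"
      unfolding E_real by (rule prob_services_le_arrivals) (use assms in auto)
    also have "\<dots> = 2 * exp (- \<rho>2\<^sup>2 / 2 * (l + 1)) * r ^ m"
      unfolding r_def by (simp add: exp_of_nat_mult[symmetric] exp_add[symmetric] algebra_simps)
    finally show ?thesis .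
  qed
  moreover have "E m \<in> events" for m unfolding E_real by measurable
  moreover have "0 \<le> r" "r < 1" unfolding r_def using assms by auto
  ultimately show ?thesis unfolding r_def by (simp add: measure_UN_le_geometric)
qed

theorem lemma3p2:
  fixes \<rho>1 \<rho>2 :: real
  assumes "0 < \<rho>1" "\<rho>1 < 1" "0 < \<rho>2" "\<rho>2 < 1 - \<rho>1"
  shows "\<exists>C c. C > 0 \<and> c > 0 \<and>
    (\<forall>(u::int) (l::nat).
       measure (queue_space \<rho>1 \<rho>2)
         {\<omega> \<in> space (queue_space \<rho>1 \<rho>2). \<exists>i\<in>{u..u + int l}. eta (fst \<omega>) (snd \<omega>) i = 2}
       \<ge> 1 - C * exp (- c * real l))"
proof -
  interpret prob_space "queue_space \<rho>1 \<rho>2" by (rule prob_space_queue_space)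
  define c where "c = \<rho>2\<^sup>2 / 2"
  have "c > 0" unfolding c_def using assms by simp
  have "prob {\<omega> \<in> space (queue_space \<rho>1 \<rho>2). \<exists>i\<in>{u..u + int l}. eta (fst \<omega>) (snd \<omega>) i = 2}
      \<ge> 1 - 2 / (1 - exp (- c)) * exp (- c * l)" (is "prob ?T \<ge> _") for u l
  proof -
    have "prob (space (queue_space \<rho>1 \<rho>2) - ?T) \<le> prob
        {\<omega>\<in>space (queue_space \<rho>1 \<rho>2). \<exists>j\<ge>u + int l. cnt (snd \<omega>) u j \<le> cnt (fst \<omega>) u j}"
      using ex_eta_eq_2_if_services_exceed_arrivals[of u l]
      by (intro finite_measure_mono) (fastforce simp: not_less[symmetric], measurable)
    also have "\<dots> \<le> 2 * exp (- c * (l + 1)) / (1 - exp (- c))"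
      using prob_ex_services_le_arrivals[of \<rho>1 \<rho>2 u l] assms unfolding c_def by simp
    also have "\<dots> \<le> 2 / (1 - exp (- c)) * exp (- c * l)"
      using \<open>c > 0\<close> by (simp add: divide_right_mono)
    finally show ?thesis by (subst (asm) prob_compl) measurable
  qed
  then show ?thesis using \<open>c > 0\<close> by (intro exI[of _ "2 / (1 - exp (- c))"] exI[of _ c]) auto
qed

end
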